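(* Suppose the standing assumptions (1)–(5) below hold, and that both the feature and all edges incident to the $g_n$-th node of the $n$-th training graph must be unlearned: the updated dataset is $\mathcal{D}'=(\mathbf{Z}',\mathbf{y})$ with $\mathbf{z}_i'=\mathbf{z}_i$ for $i<n$ and $\mathbf{z}_n'=\Phi(\mathbf{S}_n',\mathbf{x}_n')$, where $\mathbf{x}_n'$ agrees with $\mathbf{x}_n$ except $[\mathbf{x}_n']_{g_n}=0$, and $\mathbf{S}_n'$ is obtained from $\mathbf{S}_n$ by setting the $g_n$-th row and column to zero. Then the updated model $\mathbf{w}'=\mathbf{w}^\star+\mathbf{H}_{\mathbf{w}^\star}^{-1}\Delta$ satisfies $$\|\nabla L(\mathbf{w}',\mathcal{D}')\|\leq \frac{4\gamma_2 C_1^2F^3}{\lambda^2 n},\qquad F=\sqrt{\sum_{l=0}^{L-1}B^{2l}},$$ where $B$ is the upper frame constant of the graph wavelets used in the GST.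
   Context: Setting (graph classification). There are $n$ training graphs $\mathcal{G}_1,\dots,\mathcal{G}_n$. Graph $\mathcal{G}_i$ has $g_i$ nodes, a symmetric adjacency matrix $\mathbf{S}_i\in\mathbb{R}^{g_i\times g_i}$ (the graph shift operator), a node signal $\mathbf{x}_i\in\mathbb{R}^{g_i}$ (one scalar feature per node) and a label $y_i$. Graph scattering transform (GST). Fix positive integers $J,L$ and wavelet kernel functions $h_1,\dots,h_J:\mathbb{R}\to\mathbb{R}$. For a symmetric $\mathbf{S}=\mathbf{V}\mathbf{\Lambda}\mathbf{V}^T$ with eigenvalues $\lambda_1,\dots,\lambda_g$, set $\mathbf{H}_j(\mathbf{S})=\mathbf{V}\,\mathrm{diag}(h_j(\lambda_1),\dots,h_j(\lambda_g))\mathbf{V}^T$. The wavelets form a frame: there are constants $0<A\le B$ with $A^2\|\mathbf{x}\|^2\le\sum_{j=1}^J\|\mathbf{H}_j(\mathbf{S})\mathbf{x}\|^2\le B^2\|\mathbf{x}\|^2$ for all $\mathbf{x}$ (for all shift operators considered). Let $\rho$ be the entrywise absolute value. For a path $p=(j_1,\dots,j_l)$ with $j_k\in\{1,\dots,J\}$ and $0\le l\le L-1$, define $\Phi_{()}(\mathbf{S},\mathbf{x})=\mathbf{x}$ and $\Phi_{(j_1,\dots,j_l)}(\mathbf{S},\mathbf{x})=\rho\big(\mathbf{H}_{j_l}(\mathbf{S})\Phi_{(j_1,\dots,j_{l-1})}(\mathbf{S},\mathbf{x})\big)$, and the scalar coefficient $\phi_p(\mathbf{S},\mathbf{x})=U\Phi_p(\mathbf{S},\mathbf{x})$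 with the averaging operator $U=\frac{1}{g}\mathbf{1}^T$ ($g$ the number of nodes). The embedding $\Phi(\mathbf{S},\mathbf{x})\in\mathbb{R}^d$, $d=\sum_{l=0}^{L-1}J^l$, is the concatenation of all $\phi_p(\mathbf{S},\mathbf{x})$. Set $\mathbf{z}_i=\Phi(\mathbf{S}_i,\mathbf{x}_i)$, let $\mathbf{Z}$ have rows $\mathbf{z}_i^T$, and $\mathcal{D}=(\mathbf{Z},\mathbf{y})$. Learning and update. $\ell(s,y)$ is convex and twice differentiable in $s$; $\ell'$, $\ell''$ denote derivatives in $s$, and $\nabla$, $\nabla^2$ denote gradient/Hessian in $\mathbf{w}$. For a dataset $\mathcal{D}=(\mathbf{Z},\mathbf{y})$, $L(\mathbf{w},\mathcal{D})=\sum_{i=1}^n\big(\ell(\mathbf{w}^T\mathbf{z}_i,y_i)+\frac{\lambda}{2}\|\mathbf{w}\|^2\big)$ with $\lambda>0$, and $\mathbf{w}^\star=\arg\min_{\mathbf{w}}L(\mathbf{w},\mathcal{D})$. For the updated dataset $\mathcal{D}'$, set $\mathbf{H}_{\mathbf{w}^\star}=\nabla^2L(\mathbf{w}^\star,\mathcal{D}')$ and $\Delta=\nabla L(\mathbf{w}^\star,\mathcal{D})-\nabla L(\mathbf{w}^\star,\mathcal{D}')$. Norms are $\ell_2$ for vectors and operator norm for matrices. Standing assumptions: there are constants $C_1,C_2,\gamma_1,\gamma_2$ such that for every embedding $\mathbf{z}_i$ (of $\mathcal{D}$ or $\mathcal{D}'$) and every $\mathbf{w}\in\mathbb{R}^d$: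 (1) $\|\nabla\ell(\mathbf{w}^T\mathbf{z}_i,y_i)\|\le C_1$; (2) $|\ell'(\mathbf{w}^T\mathbf{z}_i,y_i)|\le C_2$; (3) $\ell'$ is $\gamma_1$-Lipschitz; (4) $\ell''$ is $\gamma_2$-Lipschitz; (5) the signals satisfy $|[\mathbf{x}_i]_j|\le1$ for all $i$ and all $j\in\{1,\dots,g_i\}$. *)

theory Defs
  imports "HOL-Analysis.Analysis"
begin

type_synonym gmat = "nat \<Rightarrow> nat \<Rightarrow> real"
type_synonym gvec = "nat \<Rightarrow> real"

definition gmv :: "nat \<Rightarrow> gmat \<Rightarrow> gvec \<Rightarrow> gvec" where
  "gmv g A x = (\<lambda>i. \<Sum>j<g. A i j * x j)"

definition gnorm :: "nat \<Rightarrow> gvec \<Rightarrow> real" where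
  "gnorm g x = sqrt (\<Sum>i<g. (x i)\<^sup>2)"

definition gsym :: "nat \<Rightarrow> gmat \<Rightarrow> bool" where
  "gsym g S \<longleftrightarrow> (\<forall>i<g. \<forall>j<g. S i j = S j i)"

text \<open>Spectral matrix function H(S) = V diag(h(lambda_1),...,h(lambda_g)) V^T, where
  S = V diag(lambda) V^T with V orthogonal (eigendecomposition of the symmetric S).\<close>
definition matfun :: "nat \<Rightarrow> (real \<Rightarrow> real) \<Rightarrow> gmat \<Rightarrow> gmat" where
  "matfun g h S = (SOME H. \<exists>V lam.
      (\<forall>i<g. \<forall>j<g. (\<Sum>k<g. V k i * V k j) = (if i = j then 1 else 0)) \<and>
      (\<forall>i<g. \<forall>j<g. S i j = (\<Sum>k<g. V i k * lam k * V j k)) \<and>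
      (\<forall>i j. H i j = (if i < g \<and> j < g then (\<Sum>k<g. V i k * h (lam k) * V j k) else 0)))"

fun scat :: "nat \<Rightarrow> (nat \<Rightarrow> real \<Rightarrow> real) \<Rightarrow> gmat \<Rightarrow> gvec \<Rightarrow> nat list \<Rightarrow> gvec" where
  "scat g h S x [] = x"
| "scat g h S x (j # js) = scat g h S (\<lambda>i. \<bar>gmv g (matfun g (h j) S) x i\<bar>) js"

definition scoef :: "nat \<Rightarrow> (nat \<Rightarrow> real \<Rightarrow> real) \<Rightarrow> gmat \<Rightarrow> gvec \<Rightarrow> nat list \<Rightarrow> real" where
  "scoef g h S x p = (1 / real g) * (\<Sum>i<g. scat g h S x p i)"

definition paths :: "nat \<Rightarrow> nat \<Rightarrow> nat list set" where
  "paths J L = {p. set p \<subseteq> {1..J} \<and> length p < L}"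

text \<open>GST embedding in R^d, coordinates indexed through a bijection idx : 'd -> paths.\<close>
definition gst :: "('d::finite \<Rightarrow> nat list) \<Rightarrow> nat \<Rightarrow> (nat \<Rightarrow> real \<Rightarrow> real) \<Rightarrow> gmat \<Rightarrow> gvec \<Rightarrow> real ^ 'd" where
  "gst idx g h S x = (\<chi> k. scoef g h S x (idx k))"

definition del_node_mat :: "nat \<Rightarrow> gmat \<Rightarrow> gmat" where
  "del_node_mat k S = (\<lambda>i j. if i = k \<or> j = k then 0 else S i j)"

definition del_node_vec :: "nat \<Rightarrow> gvec \<Rightarrow> gvec" where
  "del_node_vec k x = x(k := 0)"

definition grad :: "(real ^ 'd::finite \<Rightarrow> real) \<Rightarrow> real ^ 'd \<Rightarrow> real ^ 'd" where
  "grad f w = (\<chi> i. frechet_derivative f (at w) (axis i 1))"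

definition hess :: "(real ^ 'd::finite \<Rightarrow> real) \<Rightarrow> real ^ 'd \<Rightarrow> real ^ 'd ^ 'd" where
  "hess f w = matrix (frechet_derivative (grad f) (at w))"

definition risk :: "(real \<Rightarrow> 'y \<Rightarrow> real) \<Rightarrow> real \<Rightarrow> nat \<Rightarrow> (nat \<Rightarrow> real ^ 'd::finite) \<Rightarrow> (nat \<Rightarrow> 'y) \<Rightarrow> real ^ 'd \<Rightarrow> real" where
  "risk loss lam n z y w = (\<Sum>i=1..n. loss (w \<bullet> z i) (y i) + lam / 2 * (norm w)\<^sup>2)"

end

theory Submission
  imports Defs
begin

text \<open>The gradient of the risk is \<open>\<Sum>\<^sub>i (l'(w\<bullet>z\<^sub>i) z\<^sub>i + \<lambda> w)\<close> and its
  Hessian is \<open>\<Sum>\<^sub>i (l''(w\<bullet>z\<^sub>i) z\<^sub>i z\<^sub>i\<^sup>T + \<lambda> I)\<close>; convexity gives \<open>l'' \<ge> 0\<close>,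
  so the Hessian dominates \<open>n\<lambda> I\<close>. Since \<open>w\<^sup>\<star>\<close> is a critical point of the old
  risk, the Newton step \<open>\<delta> = H\<^sup>-\<^sup>1\<Delta>\<close> cancels the first-order part of the new gradient,
  so the new gradient at \<open>w\<^sup>\<star> + \<delta>\<close> is a sum of second-order Taylor remainders of
  \<open>l'\<close>, each of norm at most \<open>\<gamma>\<^sub>2 (\<delta>\<bullet>z'\<^sub>i)\<^sup>2 norm z'\<^sub>i\<close>. Only the \<open>n\<close>-th summand of
  \<open>\<Delta>\<close> is nonzero, whence \<open>norm \<Delta> \<le> 2C\<^sub>1\<close> and \<open>norm \<delta> \<le> 2C\<^sub>1/(n\<lambda>)\<close>.
  Finally every embedding has norm at most \<open>F\<close>: by the upper frame bound the propagated
  signals of depth \<open>l\<close> have total energy at most \<open>B\<^sup>2\<^sup>l (norm x)\<^sup>2 \<le> B\<^sup>2\<^sup>l g\<close>, and by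
  Cauchy-Schwarz averaging over the \<open>g\<close> nodes divides the energy by \<open>g\<close>.\<close>

section \<open>Gradient and Hessian of the regularized risk\<close>

lemma grad_eqI:
  fixes f :: "real ^ 'd::finite \<Rightarrow> real"
  assumes "(f has_derivative (\<lambda>v. v \<bullet> G)) (at w)"
  shows "grad f w = G"
proof -
  have "frechet_derivative f (at w) = (\<lambda>v. v \<bullet> G)"
    using frechet_derivative_at[OF assms] by simp
  then show ?thesis unfolding grad_def by (simp add: vec_eq_iff inner_axis')
qed

lemma has_derivative_comp_inner:
  fixes z :: "real ^ 'd::finite"
  assumes "\<And>s. (\<phi> has_real_derivative \<phi>' s) (at s)"
  shows "((\<lambda>v. \<phi> (v \<bullet> z)) has_derivative (\<lambda>v. v \<bullet> (\<phi>' (w \<bullet> z) *\<^sub>R z))) (at w)"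
proof -
  have "((\<lambda>v. v \<bullet> z) has_derivative (\<lambda>v. v \<bullet> z)) (at w)"
    by (intro bounded_linear_imp_has_derivative bounded_linear_inner_left)
  moreover have "(\<phi> has_derivative (\<lambda>t. \<phi>' (w \<bullet> z) * t)) (at (w \<bullet> z))"
    using assms[of "w \<bullet> z"] by (simp add: has_field_derivative_def)
  ultimately show ?thesis
    using diff_chain_at by (fastforce simp: o_def mult.commute)
qed

lemma grad_comp_inner:
  fixes z :: "real ^ 'd::finite"
  assumes "\<And>s. (\<phi> has_real_derivative \<phi>' s) (at s)"
  shows "grad (\<lambda>v. \<phi> (v \<bullet> z)) w = \<phi>' (w \<bullet> z) *\<^sub>R z"
  using assms by (intro grad_eqI has_derivative_comp_inner)

definition risk_gradient ::
    "(real \<Rightarrow> 'y \<Rightarrow> real) \<Rightarrow> real \<Rightarrow> nat \<Rightarrow> (nat \<Rightarrow> real ^ 'd::finite) \<Rightarrow> (nat \<Rightarrow> 'y) \<Rightarrow>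
      real ^ 'd \<Rightarrow> real ^ 'd" where
  "risk_gradient l' lam n z y w = (\<Sum>i=1..n. l' (w \<bullet> z i) (y i) *\<^sub>R z i + lam *\<^sub>R w)"

definition risk_hessian ::
    "(real \<Rightarrow> 'y \<Rightarrow> real) \<Rightarrow> real \<Rightarrow> nat \<Rightarrow> (nat \<Rightarrow> real ^ 'd::finite) \<Rightarrow> (nat \<Rightarrow> 'y) \<Rightarrow>
      real ^ 'd \<Rightarrow> real ^ 'd \<Rightarrow> real ^ 'd" where
  "risk_hessian l'' lam n z y w u = (\<Sum>i=1..n. (l'' (w \<bullet> z i) (y i) * (u \<bullet> z i)) *\<^sub>R z i + lam *\<^sub>R u)"

lemma has_derivative_risk:
  fixes z :: "nat \<Rightarrow> real ^ 'd::finite"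
  assumes "\<And>s yy. ((\<lambda>t. loss t yy) has_real_derivative l' s yy) (at s)"
  shows "(risk loss lam n z y has_derivative (\<lambda>v. v \<bullet> risk_gradient l' lam n z y w)) (at w)"
proof -
  have "((\<lambda>w. lam / 2 * (w \<bullet> w)) has_derivative (\<lambda>v. lam / 2 * (w \<bullet> v + v \<bullet> w))) (at w)"
    by (auto intro!: derivative_eq_intros)
  then have regularizer: "((\<lambda>w. lam / 2 * (norm w)\<^sup>2) has_derivative (\<lambda>v. v \<bullet> (lam *\<^sub>R w))) (at w)"
    by (simp add: power2_norm_eq_inner inner_commute algebra_simps)
  have "((\<lambda>v. loss (v \<bullet> z i) (y i)) has_derivative (\<lambda>v. v \<bullet> (l' (w \<bullet> z i) (y i) *\<^sub>R z i))) (at w)" for i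
    using assms by (rule has_derivative_comp_inner)
  then have "(risk loss lam n z y has_derivative
        (\<lambda>v. \<Sum>i=1..n. v \<bullet> (l' (w \<bullet> z i) (y i) *\<^sub>R z i) + v \<bullet> (lam *\<^sub>R w))) (at w)"
    unfolding risk_def by (intro has_derivative_sum has_derivative_add regularizer)
  then show ?thesis
    by (simp add: risk_gradient_def inner_sum_right inner_add_right)
qed

lemma grad_risk:
  fixes z :: "nat \<Rightarrow> real ^ 'd::finite"
  assumes "\<And>s yy. ((\<lambda>t. loss t yy) has_real_derivative l' s yy) (at s)"
  shows "grad (risk loss lam n z y) = risk_gradient l' lam n z y"
  using assms by (intro ext grad_eqI has_derivative_risk)

lemma has_derivative_risk_gradient:
  fixes z :: "nat \<Rightarrow> real ^ 'd::finite"
  assumes "\<And>s yy. ((\<lambda>t. l' t yy) has_real_derivative l'' s yy) (at s)"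
  shows "(risk_gradient l' lam n z y has_derivative risk_hessian l'' lam n z y w) (at w)"
proof -
  have "((\<lambda>v. l' (v \<bullet> z i) (y i) *\<^sub>R z i) has_derivative
        (\<lambda>u. (l'' (w \<bullet> z i) (y i) * (u \<bullet> z i)) *\<^sub>R z i)) (at w)" for i
    using has_derivative_comp_inner[of "\<lambda>t. l' t (y i)" "\<lambda>s. l'' s (y i)" "z i" w] assms
    by (intro has_derivative_scaleR_left) (simp add: mult.commute)
  moreover have "((\<lambda>v. lam *\<^sub>R v) has_derivative (\<lambda>u. lam *\<^sub>R u)) (at w)"
    by (intro bounded_linear_imp_has_derivative bounded_linear_scaleR_right)
  ultimately show ?thesis
    unfolding risk_gradient_def risk_hessian_def[abs_def]
    by (intro has_derivative_sum has_derivative_add)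
qed

lemma hess_risk_mult:
  fixes z :: "nat \<Rightarrow> real ^ 'd::finite"
  assumes "\<And>s yy. ((\<lambda>t. loss t yy) has_real_derivative l' s yy) (at s)"
    and "\<And>s yy. ((\<lambda>t. l' t yy) has_real_derivative l'' s yy) (at s)"
  shows "hess (risk loss lam n z y) w *v u = risk_hessian l'' lam n z y w u"
proof -
  have deriv: "(risk_gradient l' lam n z y has_derivative risk_hessian l'' lam n z y w) (at w)"
    using assms(2) by (rule has_derivative_risk_gradient)
  then have "frechet_derivative (grad (risk loss lam n z y)) (at w) = risk_hessian l'' lam n z y w"
    unfolding grad_risk[OF assms(1)] by (simp add: frechet_derivative_at[symmetric])
  moreover have "linear (risk_hessian l'' lam n z y w)"
    using has_derivative_linear[OF deriv] .
  ultimately show ?thesis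
    unfolding hess_def by (simp add: matrix_works linear_linear)
qed

lemma inner_risk_hessian_ge:
  assumes "\<And>s yy. 0 \<le> l'' s yy"
  shows "real n * lam * (norm u)\<^sup>2 \<le> u \<bullet> risk_hessian l'' lam n z y w u"
proof -
  have "u \<bullet> risk_hessian l'' lam n z y w u
      = (\<Sum>i=1..n. l'' (w \<bullet> z i) (y i) * (u \<bullet> z i)\<^sup>2 + lam * (norm u)\<^sup>2)"
    unfolding risk_hessian_def
    by (simp add: inner_sum_right inner_add_right power2_norm_eq_inner mult.assoc flip: power2_eq_square)
  also have "\<dots> \<ge> (\<Sum>i=1..n. lam * (norm u)\<^sup>2)"
    using assms by (intro sum_mono) simp
  finally show ?thesis by simp
qed

lemma risk_gradient_eq_0_at_minimizer:
  fixes z :: "nat \<Rightarrow> real ^ 'd::finite"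
  assumes "\<And>s yy. ((\<lambda>t. loss t yy) has_real_derivative l' s yy) (at s)"
    and "\<And>w. risk loss lam n z y wstar \<le> risk loss lam n z y w"
  shows "risk_gradient l' lam n z y wstar = 0"
proof -
  have "(\<lambda>v. v \<bullet> risk_gradient l' lam n z y wstar) = (\<lambda>v. 0)"
    using assms
    by (intro differential_zero_maxmin[of wstar UNIV, OF _ _ has_derivative_risk]) auto
  then show ?thesis by (metis inner_eq_zero_iff)
qed

lemma norm_grad_risk_diff_le:
  fixes z z' :: "nat \<Rightarrow> real ^ 'd::finite"
  assumes loss_deriv: "\<And>s yy. ((\<lambda>t. loss t yy) has_real_derivative l' s yy) (at s)"
    and "m \<in> {1..n}" and "\<And>i. i \<in> {1..n} \<Longrightarrow> i \<noteq> m \<Longrightarrow> z' i = z i"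
    and "norm (grad (\<lambda>v. loss (v \<bullet> z m) (y m)) w) \<le> C"
    and "norm (grad (\<lambda>v. loss (v \<bullet> z' m) (y m)) w) \<le> C"
  shows "norm (grad (risk loss lam n z y) w - grad (risk loss lam n z' y) w) \<le> 2 * C"
proof -
  let ?a = "l' (w \<bullet> z m) (y m) *\<^sub>R z m" and ?b = "l' (w \<bullet> z' m) (y m) *\<^sub>R z' m"
  have "grad (risk loss lam n z y) w - grad (risk loss lam n z' y) w
      = (\<Sum>i\<in>{1..n}. if i = m then ?a - ?b else 0)"
    unfolding grad_risk[OF loss_deriv] risk_gradient_def sum_subtractf[symmetric]
    using assms(3) by (intro sum.cong) auto
  also have "\<dots> = ?a - ?b"
    using assms(2) by simp
  finally have diff: "grad (risk loss lam n z y) w - grad (risk loss lam n z' y) w = ?a - ?b" .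
  have "norm (?a - ?b) \<le> 2 * C"
    using norm_triangle_ineq4[of ?a ?b] assms(4,5)
    unfolding grad_comp_inner[OF loss_deriv[where yy = "y m"]] by linarith
  then show ?thesis by (simp only: diff)
qed

section \<open>Convexity and Taylor remainders in one variable\<close>

lemma convex_deriv2_nonneg:
  fixes f :: "real \<Rightarrow> real"
  assumes f': "\<And>s. (f has_real_derivative f' s) (at s)"
    and f'': "\<And>s. (f' has_real_derivative f'' s) (at s)"
    and "convex_on UNIV f"
  shows "0 \<le> f'' s"
proof (rule ccontr)
  have f'_mono: "f' a \<le> f' b" if "a < b" for a b
  proof -
    have "f' a * (b - a) \<le> f b - f a" and "f' b * (a - b) \<le> f a - f b"
      using f' by (auto intro!: convex_on_imp_above_tangent[OF \<open>convex_on UNIV f\<close>])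
    then have "f' a * (b - a) \<le> f' b * (b - a)" by (simp add: algebra_simps)
    then show ?thesis using that by simp
  qed
  assume "\<not> 0 \<le> f'' s"
  then have "f'' s < 0" by simp
  then obtain d where "d > 0" and "\<forall>h>0. h < d \<longrightarrow> f' (s + h) < f' s"
    using DERIV_neg_dec_right[OF f''] by blast
  then have "f' (s + d / 2) < f' s" by simp
  with f'_mono[of s "s + d / 2"] \<open>d > 0\<close> show False by simp
qed

lemma lipschitz_const_nonneg:
  fixes f :: "real \<Rightarrow> real"
  assumes "\<And>s t. \<bar>f s - f t\<bar> \<le> \<gamma> * \<bar>s - t\<bar>"
  shows "0 \<le> \<gamma>"
proof -
  have "\<bar>f 1 - f 0\<bar> \<le> \<gamma>" using assms[of 1 0] by simp
  then show ?thesis by (rule order_trans[OF abs_ge_zero])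
qed

lemma MVT_between:
  fixes f :: "real \<Rightarrow> real"
  assumes "\<And>s. (f has_real_derivative f' s) (at s)"
  obtains c where "\<bar>c - a\<bar> \<le> \<bar>b - a\<bar>" and "f b - f a = (b - a) * f' c"
proof (cases a b rule: linorder_cases)
  case less
  then obtain c where "a < c" "c < b" "f b - f a = (b - a) * f' c"
    using MVT2[OF less assms] by blast
  then show ?thesis by (intro that[of c]) auto
next
  case equal
  with that show ?thesis by simp
next
  case greater
  then obtain c where "b < c" "c < a" "f a - f b = (a - b) * f' c"
    using MVT2[OF greater assms] by blast
  then show ?thesis by (intro that[of c]) (auto simp: algebra_simps)
qed

lemma deriv_taylor_remainder_le:
  fixes f' :: "real \<Rightarrow> real"
  assumes "\<And>s. (f' has_real_derivative f'' s) (at s)"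
    and lipschitz: "\<And>s t. \<bar>f'' s - f'' t\<bar> \<le> \<gamma> * \<bar>s - t\<bar>"
  shows "\<bar>f' (a + b) - f' a - f'' a * b\<bar> \<le> \<gamma> * b\<^sup>2"
proof -
  obtain c where c: "\<bar>c - a\<bar> \<le> \<bar>b\<bar>" and mvt: "f' (a + b) - f' a = b * f'' c"
    using MVT_between[OF assms(1), of a "a + b"] by auto
  have "\<gamma> \<ge> 0" using lipschitz by (rule lipschitz_const_nonneg)
  have "\<bar>f' (a + b) - f' a - f'' a * b\<bar> = \<bar>b\<bar> * \<bar>f'' c - f'' a\<bar>"
    unfolding mvt by (simp add: algebra_simps abs_mult[symmetric])
  also have "\<dots> \<le> \<bar>b\<bar> * (\<gamma> * \<bar>b\<bar>)"
  proof -
    have "\<bar>f'' c - f'' a\<bar> \<le> \<gamma> * \<bar>c - a\<bar>" by (rule lipschitz)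
    also have "\<dots> \<le> \<gamma> * \<bar>b\<bar>" using c \<open>\<gamma> \<ge> 0\<close> by (rule mult_left_mono)
    finally show ?thesis by (rule mult_left_mono) simp
  qed
  finally show ?thesis by (simp add: power2_eq_square algebra_simps)
qed

section \<open>The Newton update\<close>

lemma norm_risk_gradient_remainder_le:
  fixes z :: "nat \<Rightarrow> real ^ 'd::finite" and l' l'' :: "real \<Rightarrow> 'y \<Rightarrow> real"
  assumes "\<And>s yy. ((\<lambda>t. l' t yy) has_real_derivative l'' s yy) (at s)"
    and "\<And>s t yy. \<bar>l'' s yy - l'' t yy\<bar> \<le> \<gamma> * \<bar>s - t\<bar>"
    and z_bound: "\<And>i. i \<in> {1..n} \<Longrightarrow> norm (z i) \<le> F"
  shows "norm (risk_gradient l' lam n z y (w + \<delta>) - risk_gradient l' lam n z y w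
              - risk_hessian l'' lam n z y w \<delta>) \<le> real n * (\<gamma> * (norm \<delta>)\<^sup>2 * F ^ 3)"
proof -
  define r where "r i = l' (w \<bullet> z i + \<delta> \<bullet> z i) (y i) - l' (w \<bullet> z i) (y i)
      - l'' (w \<bullet> z i) (y i) * (\<delta> \<bullet> z i)" for i
  have "\<gamma> \<ge> 0" using assms(2) by (rule lipschitz_const_nonneg)
  have remainder_bound: "norm (r i *\<^sub>R z i) \<le> \<gamma> * (norm \<delta>)\<^sup>2 * F ^ 3" if "i \<in> {1..n}" for i
  proof -
    have "\<bar>\<delta> \<bullet> z i\<bar> \<le> norm \<delta> * F"
      using Cauchy_Schwarz_ineq2[of \<delta> "z i"] z_bound[OF that]
      by (meson mult_left_mono norm_ge_zero order_trans)
    then have "(\<delta> \<bullet> z i)\<^sup>2 \<le> (norm \<delta> * F)\<^sup>2"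
      using power_mono[OF _ abs_ge_zero, of "\<delta> \<bullet> z i" "norm \<delta> * F" 2] by simp
    moreover have "\<bar>r i\<bar> \<le> \<gamma> * (\<delta> \<bullet> z i)\<^sup>2"
      unfolding r_def using assms(1,2) by (rule deriv_taylor_remainder_le)
    ultimately have "\<bar>r i\<bar> \<le> \<gamma> * (norm \<delta> * F)\<^sup>2"
      using \<open>\<gamma> \<ge> 0\<close> by (meson mult_left_mono order_trans)
    then have "\<bar>r i\<bar> * norm (z i) \<le> \<gamma> * (norm \<delta> * F)\<^sup>2 * F"
      using z_bound[OF that] \<open>\<gamma> \<ge> 0\<close> by (intro mult_mono) simp_all
    then show ?thesis by (simp add: power2_eq_square power3_eq_cube mult_ac)
  qed
  have "risk_gradient l' lam n z y (w + \<delta>) - risk_gradient l' lam n z y w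
      - risk_hessian l'' lam n z y w \<delta> = (\<Sum>i=1..n. r i *\<^sub>R z i)"
    unfolding risk_gradient_def risk_hessian_def sum_subtractf[symmetric] r_def
    by (intro sum.cong) (simp_all add: inner_add_left scaleR_diff_left scaleR_add_right)
  also have "norm \<dots> \<le> (\<Sum>i=1..n. norm (r i *\<^sub>R z i))"
    by (rule norm_sum)
  also have "\<dots> \<le> (\<Sum>i=1..n. \<gamma> * (norm \<delta>)\<^sup>2 * F ^ 3)"
    by (rule sum_mono) (rule remainder_bound)
  finally show ?thesis by simp
qed

lemma matrix_mul_matrix_inv_right:
  fixes M :: "'a::field ^ 'n ^ 'n"
  assumes "invertible M"
  shows "M ** matrix_inv M = mat 1"
  using assms unfolding invertible_def matrix_inv_def by (rule exE) (rule someI2, auto)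

lemma coercive_matrix_invertible:
  fixes M :: "real ^ 'n ^ 'n"
  assumes "c > 0" and "\<And>u. c * (norm u)\<^sup>2 \<le> u \<bullet> (M *v u)"
  shows "invertible M"
proof -
  have "u = 0" if "M *v u = 0" for u
    using assms(2)[of u] that \<open>c > 0\<close> by (simp add: mult_le_0_iff)
  then show ?thesis
    using matrix_left_invertible_ker invertible_left_inverse by blast
qed

lemma norm_solution_coercive_le:
  fixes M :: "real ^ 'n ^ 'n"
  assumes "c > 0" and "\<And>u. c * (norm u)\<^sup>2 \<le> u \<bullet> (M *v u)" and "M *v u = v"
  shows "norm u \<le> norm v / c"
proof -
  have "c * (norm u * norm u) \<le> norm v * norm u"
    using assms(2)[of u] norm_cauchy_schwarz[of u v]
    by (simp add: assms(3) power2_eq_square mult.commute)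
  then have "c * norm u \<le> norm v"
    by (cases "norm u = 0") (auto simp: mult.assoc[symmetric])
  then show ?thesis using \<open>c > 0\<close> by (simp add: field_simps)
qed

lemma norm_grad_newton_update_le:
  fixes z z' :: "nat \<Rightarrow> real ^ 'd::finite"
  assumes loss_deriv: "\<And>s yy. ((\<lambda>t. loss t yy) has_real_derivative l' s yy) (at s)"
    and loss_deriv2: "\<And>s yy. ((\<lambda>t. l' t yy) has_real_derivative l'' s yy) (at s)"
    and l''_nonneg: "\<And>s yy. 0 \<le> l'' s yy"
    and l''_lipschitz: "\<And>s t yy. \<bar>l'' s yy - l'' t yy\<bar> \<le> \<gamma> * \<bar>s - t\<bar>"
    and "n \<ge> 1" and "lam > 0"
    and z'_bound: "\<And>i. i \<in> {1..n} \<Longrightarrow> norm (z' i) \<le> F"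
    and minimizer: "\<And>w. risk loss lam n z y wstar \<le> risk loss lam n z y w"
    and shift_bound: "norm (grad (risk loss lam n z y) wstar - grad (risk loss lam n z' y) wstar) \<le> D"
  shows "norm (grad (risk loss lam n z' y)
            (wstar + matrix_inv (hess (risk loss lam n z' y) wstar)
                       *v (grad (risk loss lam n z y) wstar - grad (risk loss lam n z' y) wstar)))
         \<le> \<gamma> * D\<^sup>2 * F ^ 3 / (lam\<^sup>2 * real n)"
proof -
  define H where "H = hess (risk loss lam n z' y) wstar"
  define \<Delta> where "\<Delta> = risk_gradient l' lam n z y wstar - risk_gradient l' lam n z' y wstar"
  define \<delta> where "\<delta> = matrix_inv H *v \<Delta>"
  have npos: "real n * lam > 0" using assms(5,6) by simp
  have H: "H *v u = risk_hessian l'' lam n z' y wstar u" for u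
    unfolding H_def using loss_deriv loss_deriv2 by (rule hess_risk_mult)
  have coercive: "real n * lam * (norm u)\<^sup>2 \<le> u \<bullet> (H *v u)" for u
    unfolding H using l''_nonneg by (rule inner_risk_hessian_ge)
  have H_\<delta>: "H *v \<delta> = \<Delta>"
    using matrix_mul_matrix_inv_right[OF coercive_matrix_invertible[OF npos coercive]]
    by (simp add: \<delta>_def matrix_vector_mul_assoc)
  have "norm \<delta> \<le> norm \<Delta> / (real n * lam)"
    using npos coercive H_\<delta> by (rule norm_solution_coercive_le)
  also have "\<dots> \<le> D / (real n * lam)"
    using shift_bound npos by (simp add: \<Delta>_def grad_risk[OF loss_deriv] divide_right_mono)
  finally have \<delta>_bound: "(norm \<delta>)\<^sup>2 \<le> (D / (real n * lam))\<^sup>2"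
    by (simp add: power_mono)
  have "norm (risk_gradient l' lam n z' y (wstar + \<delta>) - risk_gradient l' lam n z' y wstar
      - risk_hessian l'' lam n z' y wstar \<delta>) \<le> real n * (\<gamma> * (norm \<delta>)\<^sup>2 * F ^ 3)"
    using loss_deriv2 l''_lipschitz z'_bound by (rule norm_risk_gradient_remainder_le)
  moreover have "risk_gradient l' lam n z' y wstar + risk_hessian l'' lam n z' y wstar \<delta> = 0"
    using H_\<delta> risk_gradient_eq_0_at_minimizer[OF loss_deriv minimizer] by (simp add: H \<Delta>_def)
  ultimately have "norm (risk_gradient l' lam n z' y (wstar + \<delta>)) \<le> real n * (\<gamma> * (norm \<delta>)\<^sup>2 * F ^ 3)"
    by (simp add: diff_diff_eq)
  also have "\<dots> \<le> real n * (\<gamma> * (D / (real n * lam))\<^sup>2 * F ^ 3)"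
  proof -
    have "\<gamma> \<ge> 0" using l''_lipschitz by (rule lipschitz_const_nonneg)
    moreover have "F \<ge> 0" using z'_bound[of 1] assms(5) by (meson atLeastAtMost_iff norm_ge_zero order.trans order_refl)
    ultimately show ?thesis using \<delta>_bound by (intro mult_left_mono mult_right_mono) auto
  qed
  also have "\<dots> = \<gamma> * D\<^sup>2 * F ^ 3 / (lam\<^sup>2 * real n)"
    using npos by (simp add: power2_eq_square field_simps)
  finally show ?thesis
    by (simp add: grad_risk[OF loss_deriv] H_def \<delta>_def \<Delta>_def)
qed

section \<open>Norm of the scattering embedding\<close>

lemma gnorm_sq: "(gnorm g v)\<^sup>2 = (\<Sum>i<g. (v i)\<^sup>2)"
  unfolding gnorm_def by (simp add: sum_nonneg)

lemma gnorm_abs: "gnorm g (\<lambda>i. \<bar>v i\<bar>) = gnorm g v"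
  unfolding gnorm_def by simp

lemma gnorm_sq_le_card:
  assumes "\<And>i. i < g \<Longrightarrow> \<bar>v i\<bar> \<le> 1"
  shows "(gnorm g v)\<^sup>2 \<le> real g"
proof -
  have "(\<Sum>i<g. (v i)\<^sup>2) \<le> (\<Sum>i<g. 1)"
    using assms by (intro sum_mono) (simp add: abs_square_le_1)
  then show ?thesis by (simp add: gnorm_sq)
qed

definition paths_of_length :: "nat \<Rightarrow> nat \<Rightarrow> nat list set" where
  "paths_of_length J l = {p. set p \<subseteq> {1..J} \<and> length p = l}"

lemma finite_paths_of_length: "finite (paths_of_length J l)"
  unfolding paths_of_length_def by (rule finite_lists_length_eq) simp

lemma paths_of_length_Suc:
  "paths_of_length J (Suc l) = (\<lambda>(p, j). j # p) ` (paths_of_length J l \<times> {1..J})"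
  unfolding paths_of_length_def by (rule lists_length_Suc_eq)

lemma scat_energy_le:
  assumes frame: "\<And>v. (\<Sum>j=1..J. (gnorm g (gmv g (matfun g (h j) T) v))\<^sup>2) \<le> B\<^sup>2 * (gnorm g v)\<^sup>2"
  shows "(\<Sum>p\<in>paths_of_length J l. (gnorm g (scat g h T x p))\<^sup>2) \<le> B ^ (2 * l) * (gnorm g x)\<^sup>2"
proof (induction l arbitrary: x)
  case 0
  have "paths_of_length J 0 = {[]}" unfolding paths_of_length_def by auto
  then show ?case by simp
next
  case (Suc l)
  have "inj_on (\<lambda>(p, j). j # p) (paths_of_length J l \<times> {1..J})"
    by (auto simp: inj_on_def)
  then have "(\<Sum>p\<in>paths_of_length J (Suc l). (gnorm g (scat g h T x p))\<^sup>2)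
      = (\<Sum>p\<in>paths_of_length J l. \<Sum>j=1..J.
           (gnorm g (scat g h T (\<lambda>i. \<bar>gmv g (matfun g (h j) T) x i\<bar>) p))\<^sup>2)"
    unfolding paths_of_length_Suc by (simp add: sum.reindex case_prod_unfold sum.cartesian_product)
  also have "\<dots> = (\<Sum>j=1..J. \<Sum>p\<in>paths_of_length J l.
           (gnorm g (scat g h T (\<lambda>i. \<bar>gmv g (matfun g (h j) T) x i\<bar>) p))\<^sup>2)"
    by (rule sum.swap)
  also have "\<dots> \<le> (\<Sum>j=1..J. B ^ (2 * l) * (gnorm g (gmv g (matfun g (h j) T) x))\<^sup>2)"
    by (rule sum_mono, rule order_trans[OF Suc.IH]) (simp add: gnorm_abs)
  also have "\<dots> = B ^ (2 * l) * (\<Sum>j=1..J. (gnorm g (gmv g (matfun g (h j) T) x))\<^sup>2)"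
    by (simp add: sum_distrib_left)
  also have "\<dots> \<le> B ^ (2 * l) * (B\<^sup>2 * (gnorm g x)\<^sup>2)"
    by (intro mult_left_mono frame) (simp add: power_mult)
  finally show ?case by (simp add: power_mult power2_eq_square mult_ac)
qed

lemma scoef_sq_le:
  assumes "g \<ge> 1"
  shows "(scoef g h T x p)\<^sup>2 \<le> (gnorm g (scat g h T x p))\<^sup>2 / real g"
proof -
  have "(\<Sum>i<g. scat g h T x p i)\<^sup>2 \<le> real g * (\<Sum>i<g. (scat g h T x p i)\<^sup>2)"
    using sum_squared_le_sum_of_squares[of "scat g h T x p" "{..<g}"] by (simp add: mult.commute)
  then show ?thesis
    using assms unfolding scoef_def gnorm_sq
    by (simp add: power_mult_distrib power_one_over field_simps power2_eq_square)
qed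

lemma norm_gst_le:
  fixes idx :: "'d::finite \<Rightarrow> nat list"
  assumes frame: "\<And>v. (\<Sum>j=1..J. (gnorm g (gmv g (matfun g (h j) T) v))\<^sup>2) \<le> B\<^sup>2 * (gnorm g v)\<^sup>2"
    and "g \<ge> 1" and x_bound: "\<And>i. i < g \<Longrightarrow> \<bar>x i\<bar> \<le> 1"
    and idx: "bij_betw idx UNIV (paths J L)"
  shows "norm (gst idx g h T x) \<le> sqrt (\<Sum>l<L. B ^ (2 * l))"
proof -
  have paths_eq: "paths J L = (\<Union>l<L. paths_of_length J l)"
    unfolding paths_def paths_of_length_def by auto
  have paths_sum: "(\<Sum>p\<in>paths J L. f p) = (\<Sum>l<L. \<Sum>p\<in>paths_of_length J l. f p)" for f :: "_ \<Rightarrow> real"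
    unfolding paths_eq
    by (rule sum.UNION_disjoint) (auto simp: finite_paths_of_length, auto simp: paths_of_length_def)
  have "(norm (gst idx g h T x))\<^sup>2 = (\<Sum>k\<in>UNIV. (scoef g h T x (idx k))\<^sup>2)"
    unfolding power2_norm_eq_inner inner_vec_def gst_def by (simp add: power2_eq_square)
  also have "\<dots> = (\<Sum>p\<in>paths J L. (scoef g h T x p)\<^sup>2)"
    by (rule sum.reindex_bij_betw[OF idx])
  also have "\<dots> = (\<Sum>l<L. \<Sum>p\<in>paths_of_length J l. (scoef g h T x p)\<^sup>2)"
    by (rule paths_sum)
  also have "\<dots> \<le> (\<Sum>l<L. (\<Sum>p\<in>paths_of_length J l. (gnorm g (scat g h T x p))\<^sup>2) / real g)"
    unfolding sum_divide_distrib using \<open>g \<ge> 1\<close> by (intro sum_mono scoef_sq_le)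
  also have "\<dots> \<le> (\<Sum>l<L. B ^ (2 * l) * (gnorm g x)\<^sup>2 / real g)"
    by (intro sum_mono divide_right_mono scat_energy_le frame) auto
  also have "\<dots> \<le> (\<Sum>l<L. B ^ (2 * l))"
    using gnorm_sq_le_card[OF x_bound] \<open>g \<ge> 1\<close>
    by (intro sum_mono) (simp add: divide_le_eq mult_left_mono power_mult)
  finally show ?thesis by (rule real_le_rsqrt)
qed

theorem theorem4p3:
  fixes n J L :: nat
    and gs :: "nat \<Rightarrow> nat" and S :: "nat \<Rightarrow> gmat" and x :: "nat \<Rightarrow> gvec" and y :: "nat \<Rightarrow> 'y"
    and h :: "nat \<Rightarrow> real \<Rightarrow> real" and A B :: real
    and idx :: "'d::finite \<Rightarrow> nat list"
    and loss l' l'' :: "real \<Rightarrow> 'y \<Rightarrow> real"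
    and lam C1 C2 \<gamma>1 \<gamma>2 :: real
    and wstar :: "real ^ 'd"
  defines "z \<equiv> (\<lambda>i. gst idx (gs i) h (S i) (x i))"
    and "z' \<equiv> (\<lambda>i. if i = n then gst idx (gs n) h (del_node_mat (gs n - 1) (S n)) (del_node_vec (gs n - 1) (x n))
                      else gst idx (gs i) h (S i) (x i))"
    and "F \<equiv> sqrt (\<Sum>l<L. B ^ (2 * l))"
  assumes n_pos: "n \<ge> 1" and J_pos: "J \<ge> 1" and L_pos: "L \<ge> 1"
    and nodes: "\<And>i. 1 \<le> i \<Longrightarrow> i \<le> n \<Longrightarrow> gs i \<ge> 1"
    and symm: "\<And>i. 1 \<le> i \<Longrightarrow> i \<le> n \<Longrightarrow> gsym (gs i) (S i)"
    and idx_bij: "bij_betw idx UNIV (paths J L)"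
    and frame_pos: "0 < A" "A \<le> B"
    and frame: "\<And>T g v. (\<exists>i. 1 \<le> i \<and> i \<le> n \<and> g = gs i \<and> T = S i) \<or> (g = gs n \<and> T = del_node_mat (gs n - 1) (S n)) \<Longrightarrow>
        A\<^sup>2 * (gnorm g v)\<^sup>2 \<le> (\<Sum>j=1..J. (gnorm g (gmv g (matfun g (h j) T) v))\<^sup>2)
        \<and> (\<Sum>j=1..J. (gnorm g (gmv g (matfun g (h j) T) v))\<^sup>2) \<le> B\<^sup>2 * (gnorm g v)\<^sup>2"
    and lam_pos: "lam > 0"
    and loss_deriv: "\<And>s yy. ((\<lambda>t. loss t yy) has_real_derivative l' s yy) (at s)"
    and loss_deriv2: "\<And>s yy. ((\<lambda>t. l' t yy) has_real_derivative l'' s yy) (at s)"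
    and loss_convex: "\<And>yy. convex_on UNIV (\<lambda>s. loss s yy)"
    and A1: "\<And>i w. 1 \<le> i \<Longrightarrow> i \<le> n \<Longrightarrow>
        norm (grad (\<lambda>v. loss (v \<bullet> z i) (y i)) w) \<le> C1 \<and> norm (grad (\<lambda>v. loss (v \<bullet> z' i) (y i)) w) \<le> C1"
    and A2: "\<And>i w. 1 \<le> i \<Longrightarrow> i \<le> n \<Longrightarrow>
        \<bar>l' (w \<bullet> z i) (y i)\<bar> \<le> C2 \<and> \<bar>l' (w \<bullet> z' i) (y i)\<bar> \<le> C2"
    and A3: "\<And>s t yy. \<bar>l' s yy - l' t yy\<bar> \<le> \<gamma>1 * \<bar>s - t\<bar>"
    and A4: "\<And>s t yy. \<bar>l'' s yy - l'' t yy\<bar> \<le> \<gamma>2 * \<bar>s - t\<bar>"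
    and A5: "\<And>i j. 1 \<le> i \<Longrightarrow> i \<le> n \<Longrightarrow> j < gs i \<Longrightarrow> \<bar>x i j\<bar> \<le> 1"
    and wstar_min: "\<And>w. risk loss lam n z y wstar \<le> risk loss lam n z y w"
  shows "norm (grad (risk loss lam n z' y)
            (wstar + matrix_inv (hess (risk loss lam n z' y) wstar)
                       *v (grad (risk loss lam n z y) wstar - grad (risk loss lam n z' y) wstar))) \<le> 4 * \<gamma>2 * C1\<^sup>2 * F ^ 3 / (lam\<^sup>2 * real n)"
proof -
  have n: "n \<in> {1..n}" using n_pos by simp
  have z'_bound: "norm (z' i) \<le> F" if i: "i \<in> {1..n}" for i
  proof -
    define T where "T = (if i = n then del_node_mat (gs n - 1) (S n) else S i)"
    define v where "v = (if i = n then del_node_vec (gs n - 1) (x n) else x i)"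
    have "norm (gst idx (gs i) h T v) \<le> F"
      unfolding F_def
    proof (rule norm_gst_le[OF _ _ _ idx_bij])
      show "(\<Sum>j=1..J. (gnorm (gs i) (gmv (gs i) (matfun (gs i) (h j) T) u))\<^sup>2) \<le> B\<^sup>2 * (gnorm (gs i) u)\<^sup>2" for u
      proof -
        have "(\<exists>k. 1 \<le> k \<and> k \<le> n \<and> gs i = gs k \<and> T = S k) \<or> (gs i = gs n \<and> T = del_node_mat (gs n - 1) (S n))"
          using i unfolding T_def by (cases "i = n") auto
        then show ?thesis using frame by blast
      qed
      show "\<bar>v j\<bar> \<le> 1" if "j < gs i" for j
        using A5[of i j] i that by (cases "i = n") (auto simp: v_def del_node_vec_def)
    qed (use nodes i in auto)
    then show ?thesis by (cases "i = n") (simp_all add: z'_def T_def v_def)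
  qed
  have shift_bound: "norm (grad (risk loss lam n z y) wstar - grad (risk loss lam n z' y) wstar) \<le> 2 * C1"
    by (rule norm_grad_risk_diff_le[OF loss_deriv n]) (use A1[of n wstar] n_pos in \<open>auto simp: z_def z'_def\<close>)
  have l''_nonneg: "0 \<le> l'' s yy" for s yy
    by (rule convex_deriv2_nonneg[OF loss_deriv loss_deriv2 loss_convex])
  have "norm (grad (risk loss lam n z' y)
            (wstar + matrix_inv (hess (risk loss lam n z' y) wstar)
                       *v (grad (risk loss lam n z y) wstar - grad (risk loss lam n z' y) wstar)))
        \<le> \<gamma>2 * (2 * C1)\<^sup>2 * F ^ 3 / (lam\<^sup>2 * real n)"
    using loss_deriv loss_deriv2 l''_nonneg A4 n_pos lam_pos z'_bound wstar_min shift_bound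
    by (rule norm_grad_newton_update_le)
  then show ?thesis by (simp add: power_mult_distrib mult_ac)
qed

end
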